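(* Let $n\ge1$, $u,v\in\mathfrak{S}_n$ and $J,K\subseteq[n-1]$. Then: (i) if $u\le v$ then $u_J\le v_J$; and if $K\subseteq J$ then $u_K\ge u_J$; (ii) $u_J\wedge v_K=(u\wedge v)_{J\cup K}$; (iii) if $J\subseteq\mathrm{GDes}(v)$ and $K\subseteq\mathrm{GDes}(u)$, then $u_J\vee v_K=(u\vee v)_{J\cap K}$.
   Context: Permutations in one-line notation. For a sequence $(a_1,\ldots,a_m)$ of distinct integers, $\mathrm{st}(a_1,\ldots,a_m)\in\mathfrak{S}_m$ is the unique permutation $x$ with $x_i<x_j\iff a_i<a_j$. For $x\in\mathfrak{S}_a,y\in\mathfrak{S}_b$, $x\times y\in\mathfrak{S}_{a+b}$ has $(x\times y)(i)=x_i$ for $i\le a$ and $(x\times y)(a+j)=a+y_j$. For $u\in\mathfrak{S}_n$ and $J=\{p_1<\cdots<p_k\}\subseteq[n-1]$, $u_J=\mathrm{st}(u_1,\ldots,u_{p_1})\times\mathrm{st}(u_{p_1+1},\ldots,u_{p_2})\times\cdots\times\mathrm{st}(u_{p_k+1},\ldots,u_n)$, and $u_\emptyset=u$. Weak order: $u\le v$ iff $\mathrm{Inv}(u)\subseteq\mathrm{Inv}(v)$, $\mathrm{Inv}(u)=\{(i,j):i<j,u_i>u_j\}$; it is a lattice with meet $\wedge$ and join $\vee$. $\mathrm{GDes}(u)$ is the set of $p\in[n-1]$ with $u_i>u_j$ for all $i\le p<j$. *)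

theory Defs
  imports Main
begin

text \<open>Permutations of [n] in one-line notation, as lists (list index 0 is position 1).\<close>
definition Sn :: "nat \<Rightarrow> nat list set" where
  "Sn n = {u. distinct u \<and> set u = {1..n}}"

definition st :: "'a::linorder list \<Rightarrow> nat list" where
  "st xs = map (\<lambda>a. card {b \<in> set xs. b \<le> a}) xs"

definition pprod :: "nat list \<Rightarrow> nat list \<Rightarrow> nat list" where
  "pprod x y = x @ map (\<lambda>i. length x + i) y"

text \<open>u_J: cut u after positions p1 < ... < pk, standardize each block, take the product.\<close>
definition parab :: "nat list \<Rightarrow> nat set \<Rightarrow> nat list" where
  "parab u J = (let q = 0 # sorted_list_of_set J @ [length u] in
     foldr pprod (map (\<lambda>i. st (drop (q ! i) (take (q ! (i+1)) u))) [0..<length q - 1]) [])"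

definition Inv :: "nat list \<Rightarrow> (nat \<times> nat) set" where
  "Inv u = {(i, j). i < j \<and> j < length u \<and> u ! i > u ! j}"

definition weak_le :: "nat list \<Rightarrow> nat list \<Rightarrow> bool" where
  "weak_le u v \<longleftrightarrow> Inv u \<subseteq> Inv v"

definition wmeet :: "nat list \<Rightarrow> nat list \<Rightarrow> nat list" where
  "wmeet u v = (THE w. w \<in> Sn (length u) \<and> weak_le w u \<and> weak_le w v \<and>
     (\<forall>z \<in> Sn (length u). weak_le z u \<and> weak_le z v \<longrightarrow> weak_le z w))"

definition wjoin :: "nat list \<Rightarrow> nat list \<Rightarrow> nat list" where
  "wjoin u v = (THE w. w \<in> Sn (length u) \<and> weak_le u w \<and> weak_le v w \<and>
     (\<forall>z \<in> Sn (length u). weak_le u z \<and> weak_le v z \<longrightarrow> weak_le w z))"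

text \<open>Global descents (1-indexed positions p; list entries u!i, i<p are positions 1..p).\<close>
definition GDes :: "nat list \<Rightarrow> nat set" where
  "GDes u = {p. 1 \<le> p \<and> p < length u \<and>
     (\<forall>i j. i < p \<and> p \<le> j \<and> j < length u \<longrightarrow> u ! i > u ! j)}"

end

theory Submission
  imports Defs
begin

text \<open>A permutation is determined by its inversion set, and the sets of pairs that occur as
  inversion sets are exactly the biclosed ones (transitive, with transitive complement). So the
  inversion set of the join of u and v is the transitive closure of Inv u \<union> Inv v, and the
  meet is obtained dually through complements. The projection u_J keeps exactly the inversions
  of u that lie inside the blocks of J, which gives (i) and (ii) at once. For (iii), global
  descents make every pair cut by J an inversion of v and every pair cut by K an inversion of u.
  A pair of the transitive closure that no common cut of J and K separates then splits into
  pairs that lie inside a block or are cut by exactly one of J and K, and all of these are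
  inversions of every common upper bound of u_J and v_K.\<close>

section \<open>Inversion sets\<close>

definition index_pairs :: "nat \<Rightarrow> (nat \<times> nat) set" where
  "index_pairs n = {(i, j). i < j \<and> j < n}"

definition biclosed :: "nat \<Rightarrow> (nat \<times> nat) set \<Rightarrow> bool" where
  "biclosed n T \<longleftrightarrow> T \<subseteq> index_pairs n \<and> trans T \<and>
     (\<forall>i j k. i < j \<and> j < k \<and> (i, k) \<in> T \<longrightarrow> (i, j) \<in> T \<or> (j, k) \<in> T)"

lemma Sn_length: "u \<in> Sn n \<Longrightarrow> length u = n"
  unfolding Sn_def using distinct_card[of u] by auto

lemma Sn_intro: "distinct w \<Longrightarrow> set w \<subseteq> {1..length w} \<Longrightarrow> w \<in> Sn (length w)"
  unfolding Sn_def using distinct_card[of w] card_subset_eq[of "{1..length w}" "set w"] by auto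

lemma Inv_subset_index_pairs: "Inv u \<subseteq> index_pairs (length u)"
  unfolding Inv_def index_pairs_def by auto

lemma biclosed_Inv: "biclosed (length u) (Inv u)"
  unfolding biclosed_def Inv_def index_pairs_def trans_def by auto

lemma biclosed_complement:
  assumes "biclosed n T"
  shows "biclosed n (index_pairs n - T)"
proof -
  have tr: "trans T"
    and co: "\<And>i j k. i < j \<Longrightarrow> j < k \<Longrightarrow> (i, k) \<in> T \<Longrightarrow> (i, j) \<in> T \<or> (j, k) \<in> T"
    using assms unfolding biclosed_def by blast+
  have "trans (index_pairs n - T)"
    by (rule transI) (use co in \<open>auto simp: index_pairs_def\<close>)
  moreover have "(i, j) \<in> index_pairs n - T \<or> (j, k) \<in> index_pairs n - T"
    if "i < j" "j < k" "(i, k) \<in> index_pairs n - T" for i j k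
    using that transD[OF tr, of i j k] unfolding index_pairs_def by auto
  ultimately show ?thesis unfolding biclosed_def by blast
qed

lemma trancl_subset_of_trans: "trans S \<Longrightarrow> R \<subseteq> S \<Longrightarrow> R\<^sup>+ \<subseteq> S"
  using trancl_mono_subset[of R S] by simp

lemma biclosed_trancl_Un:
  assumes "biclosed n T" "biclosed n T'"
  shows "biclosed n ((T \<union> T')\<^sup>+)"
proof -
  let ?R = "T \<union> T'"
  have R: "?R \<subseteq> index_pairs n" using assms unfolding biclosed_def by auto
  have "trans (index_pairs n)" unfolding trans_def index_pairs_def by auto
  then have "?R\<^sup>+ \<subseteq> index_pairs n" using R by (rule trancl_subset_of_trans)
  moreover have "(i, j) \<in> ?R\<^sup>+ \<or> (j, k) \<in> ?R\<^sup>+" if "(i, k) \<in> ?R\<^sup>+" "i < j" "j < k" for i j k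
    using that
  proof (induction arbitrary: j rule: trancl_induct)
    case (base k)
    then show ?case using assms unfolding biclosed_def by blast
  next
    case (step y k)
    have "y < k" using step.hyps(2) R unfolding index_pairs_def by auto
    consider "j < y" | "j = y" | "y < j" by linarith
    then show ?case
    proof cases
      case 1
      then show ?thesis using step by (meson trancl.trancl_into_trancl)
    next
      case 2
      then show ?thesis using step.hyps(1) by simp
    next
      case 3
      then have "(y, j) \<in> ?R \<or> (j, k) \<in> ?R"
        using assms step \<open>y < k\<close> unfolding biclosed_def by blast
      then show ?thesis using step.hyps(1) by (meson r_into_trancl trancl.trancl_into_trancl)
    qed
  qed
  ultimately show ?thesis unfolding biclosed_def by (blast intro: trans_trancl)
qed

text \<open>value_less T i j: a permutation with inversion set T has a smaller entry at position i
  than at position j.\<close>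
definition value_less :: "(nat \<times> nat) set \<Rightarrow> nat \<Rightarrow> nat \<Rightarrow> bool" where
  "value_less T i j \<longleftrightarrow> (i < j \<and> (i, j) \<notin> T) \<or> (j < i \<and> (j, i) \<in> T)"

lemma value_less_Inv:
  assumes "distinct u" "i < length u" "j < length u"
  shows "value_less (Inv u) i j \<longleftrightarrow> u ! i < u ! j"
proof -
  have "u ! i = u ! j \<longleftrightarrow> i = j" using assms by (simp add: nth_eq_iff_index_eq)
  then show ?thesis
    using assms unfolding value_less_def Inv_def by (cases i j rule: linorder_cases) auto
qed

lemma value_less_trans:
  assumes "biclosed n T" "value_less T a b" "value_less T b c"
  shows "value_less T a c"
proof -
  have tr: "trans T"
    and co: "\<And>i j k. i < j \<Longrightarrow> j < k \<Longrightarrow> (i, k) \<in> T \<Longrightarrow> (i, j) \<in> T \<or> (j, k) \<in> T"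
    using assms(1) unfolding biclosed_def by blast+
  have "a \<noteq> b" "b \<noteq> c" "a \<noteq> c" using assms(2,3) unfolding value_less_def by auto
  then consider "a < b" "b < c" | "a < c" "c < b" | "b < a" "a < c"
    | "b < c" "c < a" | "c < a" "a < b" | "c < b" "b < a" by linarith
  then show ?thesis
    using assms(2,3) co[of a b c] co[of b c a] co[of c a b] transD[OF tr, of a c b]
      transD[OF tr, of b a c] transD[OF tr, of c b a]
    unfolding value_less_def by cases auto
qed

lemma Sn_nth_eq_Suc_card:
  assumes "u \<in> Sn n" "i < n"
  shows "u ! i = Suc (card {j. j < n \<and> u ! j < u ! i})"
proof -
  let ?A = "{j. j < n \<and> u ! j < u ! i}"
  have d: "distinct u" and s: "set u = {1..n}" and l: "length u = n"
    using assms Sn_length unfolding Sn_def by auto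
  have ui: "u ! i \<in> {1..n}" using s assms(2) l nth_mem[of i u] by blast
  have "(!) u ` ?A = {x \<in> set u. x < u ! i}"
    using l by (auto simp: in_set_conv_nth)
  also have "\<dots> = {1..<u ! i}" using s ui by auto
  finally have "card ?A = card {1..<u ! i}"
    using card_image[OF inj_on_nth[OF d, of ?A]] l by simp
  then show ?thesis using ui by simp
qed

definition perm_of_Inv :: "nat \<Rightarrow> (nat \<times> nat) set \<Rightarrow> nat list" where
  "perm_of_Inv n T = map (\<lambda>i. Suc (card {j. j < n \<and> value_less T j i})) [0..<n]"

lemma perm_of_Inv_Inv:
  assumes "u \<in> Sn n"
  shows "perm_of_Inv n (Inv u) = u"
proof (rule nth_equalityI)
  have d: "distinct u" and l: "length u = n" using assms Sn_length unfolding Sn_def by auto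
  show "length (perm_of_Inv n (Inv u)) = length u" using l unfolding perm_of_Inv_def by simp
  fix i assume "i < length (perm_of_Inv n (Inv u))"
  then have i: "i < n" unfolding perm_of_Inv_def by simp
  have "value_less (Inv u) j i \<longleftrightarrow> u ! j < u ! i" if "j < n" for j
    using value_less_Inv[OF d] that i l by simp
  then have "{j. j < n \<and> value_less (Inv u) j i} = {j. j < n \<and> u ! j < u ! i}"
    by blast
  then show "perm_of_Inv n (Inv u) ! i = u ! i"
    using Sn_nth_eq_Suc_card[OF assms i] i unfolding perm_of_Inv_def by simp
qed

lemma Inv_inject:
  assumes "u \<in> Sn n" "v \<in> Sn n" "Inv u = Inv v"
  shows "u = v"
  by (metis perm_of_Inv_Inv assms)

lemma biclosed_imp_perm_of_Inv:
  assumes "biclosed n T"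
  shows "perm_of_Inv n T \<in> Sn n" "Inv (perm_of_Inv n T) = T"
proof -
  let ?w = "perm_of_Inv n T"
  define below where "below i = {j. j < n \<and> value_less T j i}" for i
  have w: "length ?w = n" "\<And>i. i < n \<Longrightarrow> ?w ! i = Suc (card (below i))"
    unfolding perm_of_Inv_def below_def by auto
  have strict: "?w ! i < ?w ! k" if "value_less T i k" "i < n" "k < n" for i k
  proof -
    have "below i \<subset> below k"
      using value_less_trans[OF assms _ that(1)] that value_less_trans[OF assms that(1)]
      unfolding below_def value_less_def by auto
    then show ?thesis using w that by (simp add: psubset_card_mono below_def)
  qed
  have total: "value_less T i k \<or> value_less T k i" if "i \<noteq> k" for i k
    using that unfolding value_less_def by auto
  have "distinct ?w"
    unfolding distinct_conv_nth w(1) using strict total by (metis less_not_refl3 less_not_sym)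
  moreover have "set ?w \<subseteq> {1..n}"
  proof -
    have "below i \<subseteq> {..<n} - {i}" for i unfolding below_def value_less_def by auto
    then have "card (below i) < n" if "i < n" for i
      using that card_mono[of "{..<n} - {i}" "below i"] by fastforce
    then show ?thesis using w by (auto simp: in_set_conv_nth Suc_le_eq)
  qed
  ultimately show "?w \<in> Sn n" using Sn_intro w(1) by fastforce
  have "(i, k) \<in> Inv ?w \<longleftrightarrow> (i, k) \<in> T" for i k
  proof (cases "i < k \<and> k < n")
    case True
    then have "value_less T k i \<longleftrightarrow> (i, k) \<in> T" "value_less T i k \<longleftrightarrow> (i, k) \<notin> T"
      unfolding value_less_def by auto
    then show ?thesis
      using True strict[of i k] strict[of k i] w(1) unfolding Inv_def by auto
  next
    case False
    then show ?thesis
      using assms Inv_subset_index_pairs[of ?w] w(1) unfolding biclosed_def index_pairs_def by auto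
  qed
  then show "Inv ?w = T" by auto
qed

section \<open>Meets and joins in the weak order\<close>

lemma weak_le_antisym:
  assumes "u \<in> Sn n" "v \<in> Sn n" "weak_le u v" "weak_le v u"
  shows "u = v"
  using assms Inv_inject unfolding weak_le_def by blast

lemma wmeet_eqI:
  assumes "length u = n" "w \<in> Sn n" "weak_le w u" "weak_le w v"
    and "\<And>z. z \<in> Sn n \<Longrightarrow> weak_le z u \<Longrightarrow> weak_le z v \<Longrightarrow> weak_le z w"
  shows "wmeet u v = w"
  unfolding wmeet_def
proof (rule the_equality)
  fix w' assume "w' \<in> Sn (length u) \<and> weak_le w' u \<and> weak_le w' v \<and>
     (\<forall>z \<in> Sn (length u). weak_le z u \<and> weak_le z v \<longrightarrow> weak_le z w')"
  then show "w' = w" using assms weak_le_antisym by metis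
qed (use assms in auto)

lemma wjoin_eqI:
  assumes "length u = n" "w \<in> Sn n" "weak_le u w" "weak_le v w"
    and "\<And>z. z \<in> Sn n \<Longrightarrow> weak_le u z \<Longrightarrow> weak_le v z \<Longrightarrow> weak_le w z"
  shows "wjoin u v = w"
  unfolding wjoin_def
proof (rule the_equality)
  fix w' assume "w' \<in> Sn (length u) \<and> weak_le u w' \<and> weak_le v w' \<and>
     (\<forall>z \<in> Sn (length u). weak_le u z \<and> weak_le v z \<longrightarrow> weak_le w' z)"
  then show "w' = w" using assms weak_le_antisym by metis
qed (use assms in auto)

lemma trans_Inv: "trans (Inv u)"
  using biclosed_Inv unfolding biclosed_def by blast

lemma Inv_wjoin:
  assumes "u \<in> Sn n" "v \<in> Sn n"
  shows "wjoin u v \<in> Sn n" "Inv (wjoin u v) = (Inv u \<union> Inv v)\<^sup>+"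
proof -
  let ?T = "(Inv u \<union> Inv v)\<^sup>+"
  have "biclosed n ?T"
    using biclosed_trancl_Un biclosed_Inv Sn_length assms by metis
  note w = biclosed_imp_perm_of_Inv[OF this]
  have "wjoin u v = perm_of_Inv n ?T"
  proof (rule wjoin_eqI)
    fix z assume "z \<in> Sn n" "weak_le u z" "weak_le v z"
    then show "weak_le (perm_of_Inv n ?T) z"
      using trancl_subset_of_trans[OF trans_Inv] w(2) unfolding weak_le_def by simp
  qed (use assms Sn_length w in \<open>auto simp: weak_le_def\<close>)
  then show "wjoin u v \<in> Sn n" "Inv (wjoin u v) = ?T" using w by simp_all
qed

text \<open>The meet is obtained dually, by closing the complements of the inversion sets.\<close>
lemma wmeet_greatest_lower_bound:
  assumes "u \<in> Sn n" "v \<in> Sn n"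
  shows "wmeet u v \<in> Sn n" "weak_le (wmeet u v) u" "weak_le (wmeet u v) v"
    and "\<And>z. z \<in> Sn n \<Longrightarrow> weak_le z u \<Longrightarrow> weak_le z v \<Longrightarrow> weak_le z (wmeet u v)"
proof -
  let ?P = "index_pairs n"
  let ?T = "?P - ((?P - Inv u) \<union> (?P - Inv v))\<^sup>+"
  have "biclosed n ?T"
    using biclosed_complement biclosed_trancl_Un biclosed_Inv Sn_length assms by metis
  note w = biclosed_imp_perm_of_Inv[OF this]
  have lower: "weak_le (perm_of_Inv n ?T) u" "weak_le (perm_of_Inv n ?T) v"
    using w(2) unfolding weak_le_def by auto
  have greatest: "weak_le z (perm_of_Inv n ?T)"
    if "z \<in> Sn n" "weak_le z u" "weak_le z v" for z
  proof -
    have "trans (?P - Inv z)"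
      using biclosed_complement[OF biclosed_Inv] Sn_length[OF that(1)]
      unfolding biclosed_def by metis
    moreover have "(?P - Inv u) \<union> (?P - Inv v) \<subseteq> ?P - Inv z"
      using that(2,3) unfolding weak_le_def by blast
    ultimately have "((?P - Inv u) \<union> (?P - Inv v))\<^sup>+ \<subseteq> ?P - Inv z"
      by (rule trancl_subset_of_trans)
    then show ?thesis
      using w(2) Inv_subset_index_pairs[of z] Sn_length[OF that(1)] unfolding weak_le_def by blast
  qed
  have "wmeet u v = perm_of_Inv n ?T"
    using wmeet_eqI[OF Sn_length[OF assms(1)] w(1) lower greatest] by blast
  then show "wmeet u v \<in> Sn n" "weak_le (wmeet u v) u" "weak_le (wmeet u v) v"
    "\<And>z. z \<in> Sn n \<Longrightarrow> weak_le z u \<Longrightarrow> weak_le z v \<Longrightarrow> weak_le z (wmeet u v)"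
    using w(1) lower greatest by simp_all
qed

section \<open>Parabolic projections\<close>

text \<open>Positions are 0-based list indices while cuts p are 1-based as in the paper: the cut p
  lies between the indices p - 1 and p.\<close>
definition same_block :: "nat set \<Rightarrow> (nat \<times> nat) set" where
  "same_block J = {(i, j). \<not> (\<exists>p\<in>J. i < p \<and> p \<le> j)}"

lemma length_st [simp]: "length (st s) = length s"
  by (simp add: st_def)

lemma nth_st: "i < length s \<Longrightarrow> st s ! i = card {b \<in> set s. b \<le> s ! i}"
  by (simp add: st_def)

lemma st_less_iff:
  assumes "distinct s" "i < length s" "j < length s"
  shows "st s ! i < st s ! j \<longleftrightarrow> s ! i < s ! j"
proof -
  have less: "st s ! i < st s ! j" if "s ! i < s ! j" "i < length s" "j < length s" for i j
  proof -
    have "{b \<in> set s. b \<le> s ! i} \<subseteq> {b \<in> set s. b \<le> s ! j}"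
      using that(1) by auto
    moreover have "s ! j \<in> {b \<in> set s. b \<le> s ! j} - {b \<in> set s. b \<le> s ! i}"
      using that by simp
    ultimately have "card {b \<in> set s. b \<le> s ! i} < card {b \<in> set s. b \<le> s ! j}"
      by (intro psubset_card_mono) auto
    then show ?thesis using that by (simp add: nth_st)
  qed
  show ?thesis
  proof (cases "i = j")
    case False
    then have "s ! i \<noteq> s ! j" using assms by (simp add: nth_eq_iff_index_eq)
    then consider "s ! i < s ! j" | "s ! j < s ! i" by (rule linorder_neqE)
    then show ?thesis using less[of i j] less[of j i] assms by cases auto
  qed simp
qed

lemma Inv_st:
  assumes "distinct s"
  shows "Inv (st s) = Inv s"
proof -
  have "(i, j) \<in> Inv (st s) \<longleftrightarrow> (i, j) \<in> Inv s" for i j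
    using st_less_iff[OF assms, of j i] unfolding Inv_def by auto
  then show ?thesis by auto
qed

lemma st_in_Sn:
  assumes "distinct s"
  shows "st s \<in> Sn (length s)"
proof -
  have "st s ! i \<noteq> st s ! j" if "i < length s" "j < length s" "i \<noteq> j" for i j
  proof -
    have "s ! i \<noteq> s ! j" using that assms by (simp add: nth_eq_iff_index_eq)
    then show ?thesis
      using st_less_iff[OF assms, of i j] st_less_iff[OF assms, of j i] that by auto
  qed
  then have "distinct (st s)" by (simp add: distinct_conv_nth)
  moreover have "x \<in> {1..length s}" if x: "x \<in> set (st s)" for x
  proof -
    obtain i where "i < length s" "x = st s ! i"
      using x by (auto simp: in_set_conv_nth)
    then have i: "i < length s" "x = card {b \<in> set s. b \<le> s ! i}" by (simp_all add: nth_st)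
    have "s ! i \<in> {b \<in> set s. b \<le> s ! i}" using i(1) by simp
    then have "1 \<le> x" using i(2) card_gt_0_iff[of "{b \<in> set s. b \<le> s ! i}"] by auto
    moreover have "x \<le> card (set s)" using i(2) card_mono[of "set s"] by auto
    ultimately show ?thesis using distinct_card[OF assms] by simp
  qed
  ultimately show ?thesis using Sn_intro[of "st s"] by (simp add: subsetI)
qed

lemma pprod_in_Sn:
  assumes "x \<in> Sn a" "y \<in> Sn b"
  shows "pprod x y \<in> Sn (a + b)"
  using assms Sn_length[OF assms(1)] unfolding Sn_def pprod_def
  by (auto simp: distinct_map inj_on_def image_iff)

lemma Inv_append_iff:
  assumes "i < j" "j < length xs + length ys"
  shows "(i, j) \<in> Inv (xs @ ys) \<longleftrightarrow>
    (j < length xs \<and> (i, j) \<in> Inv xs) \<or>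
    (length xs \<le> i \<and> (i - length xs, j - length xs) \<in> Inv ys) \<or>
    (i < length xs \<and> length xs \<le> j \<and> ys ! (j - length xs) < xs ! i)"
  using assms unfolding Inv_def by (auto simp: nth_append)

lemma Inv_map_add: "Inv (map ((+) a) y) = Inv y"
  unfolding Inv_def by auto

fun cut_positions :: "'a list list \<Rightarrow> nat set" where
  "cut_positions [] = {}"
| "cut_positions (s # r) = insert (length s) ((+) (length s) ` cut_positions r)"

lemma foldr_pprod_st:
  "distinct (concat segs) \<Longrightarrow> foldr pprod (map st segs) [] \<in> Sn (length (concat segs)) \<and>
    Inv (foldr pprod (map st segs) []) = Inv (concat segs) \<inter> same_block (cut_positions segs)"
proof (induction segs)
  case Nil
  show ?case unfolding Sn_def Inv_def by simp
next
  case (Cons s r)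
  let ?P = "foldr pprod (map st r) []"
  let ?a = "length s" and ?b = "length (concat r)"
  let ?C = "cut_positions (s # r)"
  have ds: "distinct s" and dr: "distinct (concat r)" using Cons.prems by auto
  have P: "?P \<in> Sn ?b" "Inv ?P = Inv (concat r) \<inter> same_block (cut_positions r)"
    using Cons.IH dr by auto
  have eq: "foldr pprod (map st (s # r)) [] = st s @ map ((+) ?a) ?P"
    by (simp add: pprod_def)
  have "foldr pprod (map st (s # r)) [] \<in> Sn (length (concat (s # r)))"
    using pprod_in_Sn[OF st_in_Sn[OF ds] P(1)] by simp
  moreover have
    "(i, j) \<in> Inv (st s @ map ((+) ?a) ?P) \<longleftrightarrow> (i, j) \<in> Inv (s @ concat r) \<inter> same_block ?C"
    for i j
  proof (cases "i < j \<and> j < ?a + ?b")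
    case False
    then show ?thesis unfolding Inv_def using Sn_length[OF P(1)] by auto
  next
    case True
    have lP: "length ?P = ?b" using Sn_length[OF P(1)] .
    consider "j < ?a" | "?a \<le> i" | "i < ?a" "?a \<le> j" by linarith
    then show ?thesis
    proof cases
      case 1
      moreover have "(i, j) \<in> same_block ?C" using 1 unfolding same_block_def by auto
      ultimately show ?thesis
        using True Inv_append_iff[of i j] lP Inv_st[OF ds] by simp
    next
      case 2
      moreover have "(i, j) \<in> same_block ?C \<longleftrightarrow> (i - ?a, j - ?a) \<in> same_block (cut_positions r)"
        using 2 True unfolding same_block_def by force
      ultimately show ?thesis
        using True Inv_append_iff[of i j] lP P(2) Inv_map_add by auto
    next
      case 3
      moreover have "(i, j) \<notin> same_block ?C" using 3 unfolding same_block_def by auto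
      moreover have "st s ! i \<le> ?a" "1 \<le> ?P ! (j - ?a)"
        using 3 True lP nth_mem st_in_Sn[OF ds] P(1) unfolding Sn_def by fastforce+
      ultimately show ?thesis
        using True Inv_append_iff[of i j] lP by auto
    qed
  qed
  then have "Inv (foldr pprod (map st (s # r)) []) = Inv (concat (s # r)) \<inter> same_block ?C"
    unfolding eq by auto
  ultimately show ?case by blast
qed

fun slices :: "'a list \<Rightarrow> nat list \<Rightarrow> 'a list list" where
  "slices u (a # b # q) = drop a (take b u) # slices u (b # q)"
| "slices u _ = []"

lemma map_slices:
  "map (\<lambda>i. drop (q ! i) (take (q ! (i + 1)) u)) [0..<length q - 1] = slices u q"
proof (induction u q rule: slices.induct)
  case (1 u a b q)
  have "[0..<length (a # b # q) - 1] = [0..<Suc (length q)]" by simp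
  then show ?case using 1 by (simp only: map_upt_Suc) simp
qed auto

lemma slices_concat_cut_positions:
  "sorted q \<Longrightarrow> q \<noteq> [] \<Longrightarrow> last q \<le> length u \<Longrightarrow>
    concat (slices u q) = drop (hd q) (take (last q) u) \<and>
    cut_positions (slices u q) = (\<lambda>x. x - hd q) ` set (tl q)"
proof (induction u q rule: slices.induct)
  case (1 u a b q)
  let ?l = "last (b # q)"
  have ab: "a \<le> b" and bq: "\<forall>x\<in>set q. b \<le> x" and sorted: "sorted (b # q)"
    using "1.prems"(1) by auto
  have "last (a # b # q) \<le> length u" by (rule "1.prems"(3))
  then have lu: "?l \<le> length u" by simp
  have "b \<le> ?l" using bq last_in_set[of q] by (cases "q = []") auto
  note b = this lu
  have IH: "concat (slices u (b # q)) = drop b (take ?l u)"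
      "cut_positions (slices u (b # q)) = (\<lambda>x. x - b) ` set q"
    using "1.IH" sorted "1.prems"(3) by auto
  have "take ?l u = take b u @ drop b (take ?l u)"
    using b by (metis append_take_drop_id min.absorb1 take_take)
  moreover have "a - length (take b u) = 0" using ab b by simp
  ultimately have concat: "drop a (take b u) @ drop b (take ?l u) = drop a (take ?l u)"
    by (metis drop_append drop0)
  have "length (drop a (take b u)) = b - a" using ab b by simp
  then have "cut_positions (slices u (a # b # q)) =
      insert (b - a) ((+) (b - a) ` (\<lambda>x. x - b) ` set q)"
    using IH(2) by simp
  also have "\<dots> = (\<lambda>x. x - a) ` set (b # q)" using ab bq by (auto simp: image_iff)
  finally show ?case using IH(1) concat by simp
qed auto

lemma parab_eq_foldr_slices:
  "parab u J = foldr pprod (map st (slices u (0 # sorted_list_of_set J @ [length u]))) []"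
  unfolding parab_def Let_def map_slices[symmetric] by (simp add: comp_def)

lemma parab_in_Sn_Inv:
  assumes "u \<in> Sn n" "J \<subseteq> {..n}"
  shows "parab u J \<in> Sn n" "Inv (parab u J) = Inv u \<inter> same_block J"
proof -
  have l: "length u = n" using Sn_length[OF assms(1)] .
  have "finite J" using assms(2) finite_subset by blast
  define q where "q = 0 # sorted_list_of_set J @ [n]"
  have "sorted q" unfolding q_def using \<open>finite J\<close> assms(2) by (auto simp: sorted_append)
  moreover have "set (tl q) = J \<union> {n}" unfolding q_def using \<open>finite J\<close> by auto
  ultimately have "concat (slices u q) = u" "cut_positions (slices u q) = J \<union> {n}"
    using slices_concat_cut_positions[of q u] l unfolding q_def by auto
  moreover have "distinct u" using assms(1) unfolding Sn_def by blast
  ultimately have "parab u J \<in> Sn n \<and> Inv (parab u J) = Inv u \<inter> same_block (J \<union> {n})"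
    using foldr_pprod_st[of "slices u q"] parab_eq_foldr_slices[of u J] l
    unfolding q_def by simp
  moreover have "Inv u \<inter> same_block (J \<union> {n}) = Inv u \<inter> same_block J"
    using l unfolding Inv_def same_block_def by auto
  ultimately show "parab u J \<in> Sn n" "Inv (parab u J) = Inv u \<inter> same_block J" by simp_all
qed

section \<open>Projections of meets and joins\<close>

lemma same_block_Un: "same_block (J \<union> K) = same_block J \<inter> same_block K"
  unfolding same_block_def by auto

lemma same_block_antimono: "K \<subseteq> J \<Longrightarrow> same_block J \<subseteq> same_block K"
  unfolding same_block_def by auto

lemma not_same_block_extend:
  assumes "(a, b) \<notin> same_block J \<or> (b, c) \<notin> same_block J" "a \<le> b" "b \<le> c"
  shows "(a, c) \<notin> same_block J"
  using assms unfolding same_block_def by (auto intro: le_trans le_less_trans)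

lemma GDes_separated_subset_Inv:
  assumes "J \<subseteq> GDes v"
  shows "index_pairs (length v) - same_block J \<subseteq> Inv v"
proof (rule subrelI)
  fix i j assume "(i, j) \<in> index_pairs (length v) - same_block J"
  then obtain p where "p \<in> J" "i < p" "p \<le> j" "j < length v"
    unfolding index_pairs_def same_block_def by auto
  then have "v ! j < v ! i" using assms unfolding GDes_def by blast
  then show "(i, j) \<in> Inv v" using \<open>i < p\<close> \<open>p \<le> j\<close> \<open>j < length v\<close> unfolding Inv_def by auto
qed

lemma split_before_first_cut:
  assumes "p \<in> J" "i < p" "p < p'" "p' \<in> K" "p' \<le> k"
    and first: "\<And>x. x \<in> K \<Longrightarrow> i < x \<Longrightarrow> x \<le> k \<Longrightarrow> p' \<le> x"
  shows "(i, p' - 1) \<notin> same_block J" "(i, p' - 1) \<in> same_block K" "(p' - 1, k) \<notin> same_block K"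
proof -
  show "(i, p' - 1) \<notin> same_block J" using assms(1-3) unfolding same_block_def by auto
  show "(p' - 1, k) \<notin> same_block K" using assms(2-5) unfolding same_block_def by auto
  have "\<not> (x \<in> K \<and> i < x \<and> x \<le> p' - 1)" for x
  proof
    assume x: "x \<in> K \<and> i < x \<and> x \<le> p' - 1"
    then have "x \<le> k" using assms(5) by linarith
    then have "p' \<le> x" using first x by blast
    then show False using x assms(2,3) by linarith
  qed
  then show "(i, p' - 1) \<in> same_block K" unfolding same_block_def by auto
qed

lemma first_cut:
  assumes "(i, k) \<notin> same_block J"
  obtains p where "p \<in> J" "i < p" "p \<le> k" "\<And>x. x \<in> J \<Longrightarrow> i < x \<Longrightarrow> x \<le> k \<Longrightarrow> p \<le> x"
proof -
  let ?cut = "\<lambda>p. p \<in> J \<and> i < p \<and> p \<le> k"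
  have "\<exists>p. ?cut p" using assms unfolding same_block_def by auto
  then have "?cut (LEAST p. ?cut p)" by (rule LeastI_ex)
  moreover have "(LEAST p. ?cut p) \<le> x" if "?cut x" for x using that by (rule Least_le)
  ultimately show ?thesis using that by blast
qed

lemma split_separated_pair:
  assumes "(i, k) \<notin> same_block J" "(i, k) \<notin> same_block K" "(i, k) \<in> same_block (J \<inter> K)"
  obtains j where "i < j" "j < k" "((i, j) \<in> same_block J) \<noteq> ((i, j) \<in> same_block K)"
    "(j, k) \<notin> same_block J \<or> (j, k) \<notin> same_block K"
proof -
  obtain p where p: "p \<in> J" "i < p" "p \<le> k" "\<And>x. x \<in> J \<Longrightarrow> i < x \<Longrightarrow> x \<le> k \<Longrightarrow> p \<le> x"
    using first_cut[OF assms(1)] by blast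
  obtain p' where p': "p' \<in> K" "i < p'" "p' \<le> k" "\<And>x. x \<in> K \<Longrightarrow> i < x \<Longrightarrow> x \<le> k \<Longrightarrow> p' \<le> x"
    using first_cut[OF assms(2)] by blast
  have "p \<noteq> p'" using p p' assms(3) unfolding same_block_def by auto
  then consider "p < p'" | "p' < p" by linarith
  then show ?thesis
  proof cases
    case 1
    note cut = split_before_first_cut[of p J i p' K k, OF p(1,2) 1 p'(1,3,4)]
    show ?thesis by (rule that[of "p' - 1"]) (use 1 p p' cut in simp_all)
  next
    case 2
    note cut = split_before_first_cut[of p' K i p J k, OF p'(1,2) 2 p(1,3,4)]
    show ?thesis by (rule that[of "p - 1"]) (use 2 p p' cut in simp_all)
  qed
qed

lemma separated_pairs_subset_trans:
  assumes "trans T"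
    and exactly_one: "\<And>i j. i < j \<Longrightarrow> j < n \<Longrightarrow>
      ((i, j) \<in> same_block J) \<noteq> ((i, j) \<in> same_block K) \<Longrightarrow> (i, j) \<in> T"
  shows "index_pairs n \<inter> same_block (J \<inter> K) - same_block J \<inter> same_block K \<subseteq> T"
proof -
  have "(i, k) \<in> T"
    if "i < k" "k < n" "(i, k) \<notin> same_block J" "(i, k) \<notin> same_block K"
      "(i, k) \<in> same_block (J \<inter> K)" for i k
    using that
  proof (induction "k - i" arbitrary: i rule: less_induct)
    \<comment> \<open>split (i, k) just before the later of the first J-cut and the first K-cut\<close>
    case less
    obtain j where j: "i < j" "j < k" "((i, j) \<in> same_block J) \<noteq> ((i, j) \<in> same_block K)"
      "(j, k) \<notin> same_block J \<or> (j, k) \<notin> same_block K"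
      using split_separated_pair less.prems(3-5) by blast
    have "(i, j) \<in> T" using exactly_one j less.prems(2) by simp
    moreover have "(j, k) \<in> T"
    proof (cases "((j, k) \<in> same_block J) \<noteq> ((j, k) \<in> same_block K)")
      case True
      then show ?thesis using exactly_one j less.prems(2) by blast
    next
      case False
      moreover have "(j, k) \<in> same_block (J \<inter> K)"
        using less.prems(5) j(1) unfolding same_block_def by auto
      ultimately show ?thesis using less.hyps[of j] j less.prems(2) by auto
    qed
    ultimately show ?case using transD[OF \<open>trans T\<close>] by blast
  qed
  then have "(i, k) \<in> T"
    if "(i, k) \<in> index_pairs n \<inter> same_block (J \<inter> K) - same_block J \<inter> same_block K" for i k
    using that exactly_one unfolding index_pairs_def by (cases "(i, k) \<in> same_block J") auto
  then show ?thesis by (rule subrelI)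
qed

lemma trans_Inv_Un_separated:
  assumes "z \<in> Sn n"
  shows "trans (Inv z \<union> (index_pairs n - same_block J - same_block K))"
proof (rule transI)
  let ?X = "index_pairs n - same_block J - same_block K"
  fix a b c assume ab: "(a, b) \<in> Inv z \<union> ?X" and bc: "(b, c) \<in> Inv z \<union> ?X"
  have "Inv z \<subseteq> index_pairs n" using Inv_subset_index_pairs Sn_length[OF assms] by metis
  then have "a < b" "b < c" "c < n" using ab bc unfolding index_pairs_def by auto
  show "(a, c) \<in> Inv z \<union> ?X"
  proof (cases "(a, b) \<in> ?X \<or> (b, c) \<in> ?X")
    case True
    have "a \<le> b" "b \<le> c" using \<open>a < b\<close> \<open>b < c\<close> by simp_all
    moreover have "(a, b) \<notin> same_block J \<or> (b, c) \<notin> same_block J"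
      "(a, b) \<notin> same_block K \<or> (b, c) \<notin> same_block K" using True by blast+
    ultimately have "(a, c) \<notin> same_block J" "(a, c) \<notin> same_block K"
      using not_same_block_extend by blast+
    then show ?thesis using \<open>a < b\<close> \<open>b < c\<close> \<open>c < n\<close> unfolding index_pairs_def by auto
  next
    case False
    then have "(a, b) \<in> Inv z" "(b, c) \<in> Inv z" using ab bc by blast+
    then show ?thesis using transD[OF trans_Inv] by blast
  qed
qed

text \<open>Global descents make every pair cut by J an inversion of v and every pair cut by K an
  inversion of u, so Inv u \<union> Inv v lies in the transitive relation formed by Inv z and the
  pairs cut by both.\<close>
lemma trancl_Inv_same_block_subset:
  assumes "u \<in> Sn n" "v \<in> Sn n" "z \<in> Sn n" "J \<subseteq> GDes v" "K \<subseteq> GDes u"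
    and uz: "Inv u \<inter> same_block J \<subseteq> Inv z" and vz: "Inv v \<inter> same_block K \<subseteq> Inv z"
  shows "(Inv u \<union> Inv v)\<^sup>+ \<inter> same_block (J \<inter> K) \<subseteq> Inv z"
proof -
  let ?P = "index_pairs n"
  let ?S = "Inv z \<union> (?P - same_block J - same_block K)"
  have Jv: "?P - same_block J \<subseteq> Inv v" and Ku: "?P - same_block K \<subseteq> Inv u"
    using GDes_separated_subset_Inv assms(1,2,4,5) Sn_length by metis+
  have "Inv u \<union> Inv v \<subseteq> ?S"
    using Inv_subset_index_pairs[of u] Inv_subset_index_pairs[of v] Sn_length assms(1,2) Jv Ku uz vz
    by blast
  then have "(Inv u \<union> Inv v)\<^sup>+ \<subseteq> ?S"
    by (rule trancl_subset_of_trans[OF trans_Inv_Un_separated[OF assms(3)]])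
  moreover have "?P \<inter> same_block (J \<inter> K) - same_block J \<inter> same_block K \<subseteq> Inv z"
  proof (rule separated_pairs_subset_trans[OF trans_Inv])
    fix i j assume "i < j" "j < n" "((i, j) \<in> same_block J) \<noteq> ((i, j) \<in> same_block K)"
    then show "(i, j) \<in> Inv z"
      using Jv Ku uz vz unfolding index_pairs_def by blast
  qed
  ultimately show ?thesis by blast
qed

lemma parab_mono:
  assumes "u \<in> Sn n" "v \<in> Sn n" "J \<subseteq> {..n}" "weak_le u v"
  shows "weak_le (parab u J) (parab v J)"
  using parab_in_Sn_Inv[OF assms(1,3)] parab_in_Sn_Inv[OF assms(2,3)] assms(4)
  unfolding weak_le_def by auto

lemma parab_antimono:
  assumes "u \<in> Sn n" "J \<subseteq> {..n}" "K \<subseteq> J"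
  shows "weak_le (parab u J) (parab u K)"
proof -
  have "K \<subseteq> {..n}" using assms(2,3) by blast
  then show ?thesis
    using parab_in_Sn_Inv[OF assms(1,2)] parab_in_Sn_Inv[OF assms(1)]
      same_block_antimono[OF assms(3)]
    unfolding weak_le_def by auto
qed

lemma wmeet_parab:
  assumes "u \<in> Sn n" "v \<in> Sn n" "J \<subseteq> {..n}" "K \<subseteq> {..n}"
  shows "wmeet (parab u J) (parab v K) = parab (wmeet u v) (J \<union> K)"
proof -
  note w = wmeet_greatest_lower_bound[OF assms(1,2)]
  note uJ = parab_in_Sn_Inv[OF assms(1,3)] and vK = parab_in_Sn_Inv[OF assms(2,4)]
  have "J \<union> K \<subseteq> {..n}" using assms(3,4) by blast
  note M = parab_in_Sn_Inv[OF w(1) this]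
  show ?thesis
  proof (rule wmeet_eqI[OF Sn_length[OF uJ(1)] M(1)])
    show "weak_le (parab (wmeet u v) (J \<union> K)) (parab u J)"
      "weak_le (parab (wmeet u v) (J \<union> K)) (parab v K)"
      using assms(3,4) M(2) uJ(2) vK(2) w(2,3) same_block_Un unfolding weak_le_def by auto
  next
    fix z assume z: "z \<in> Sn n" "weak_le z (parab u J)" "weak_le z (parab v K)"
    then have "weak_le z (wmeet u v)"
      using w(4) uJ(2) vK(2) unfolding weak_le_def by auto
    then show "weak_le z (parab (wmeet u v) (J \<union> K))"
      using z assms(3,4) M(2) uJ(2) vK(2) same_block_Un unfolding weak_le_def by auto
  qed
qed

lemma wjoin_parab:
  assumes "u \<in> Sn n" "v \<in> Sn n" "J \<subseteq> GDes v" "K \<subseteq> GDes u"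
  shows "wjoin (parab u J) (parab v K) = parab (wjoin u v) (J \<inter> K)"
proof -
  have "GDes w \<subseteq> {..n}" if "w \<in> Sn n" for w
    using Sn_length[OF that] unfolding GDes_def by auto
  then have JK: "J \<subseteq> {..n}" "K \<subseteq> {..n}" "J \<inter> K \<subseteq> {..n}" using assms by blast+
  note x = Inv_wjoin[OF assms(1,2)]
  note uJ = parab_in_Sn_Inv[OF assms(1) JK(1)] and vK = parab_in_Sn_Inv[OF assms(2) JK(2)]
  note M = parab_in_Sn_Inv[OF x(1) JK(3)]
  show ?thesis
  proof (rule wjoin_eqI[OF Sn_length[OF uJ(1)] M(1)])
    have "same_block J \<subseteq> same_block (J \<inter> K)" "same_block K \<subseteq> same_block (J \<inter> K)"
      by (simp_all add: same_block_antimono)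
    then show "weak_le (parab u J) (parab (wjoin u v) (J \<inter> K))"
      "weak_le (parab v K) (parab (wjoin u v) (J \<inter> K))"
      using M(2) uJ(2) vK(2) x(2) unfolding weak_le_def by auto
  next
    fix z assume z: "z \<in> Sn n" "weak_le (parab u J) z" "weak_le (parab v K) z"
    then have "Inv u \<inter> same_block J \<subseteq> Inv z" "Inv v \<inter> same_block K \<subseteq> Inv z"
      using uJ(2) vK(2) unfolding weak_le_def by simp_all
    then have "(Inv u \<union> Inv v)\<^sup>+ \<inter> same_block (J \<inter> K) \<subseteq> Inv z"
      by (rule trancl_Inv_same_block_subset[OF assms(1,2) z(1) assms(3,4)])
    then show "weak_le (parab (wjoin u v) (J \<inter> K)) z"
      using M(2) x(2) unfolding weak_le_def by simp
  qed
qed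

theorem mainTheorem6:
  fixes n :: nat and u v :: "nat list" and J K :: "nat set"
  assumes "n \<ge> 1" and "u \<in> Sn n" and "v \<in> Sn n"
    and "J \<subseteq> {1..n-1}" and "K \<subseteq> {1..n-1}"
  shows "(weak_le u v \<longrightarrow> weak_le (parab u J) (parab v J))
    \<and> (K \<subseteq> J \<longrightarrow> weak_le (parab u J) (parab u K))
    \<and> wmeet (parab u J) (parab v K) = parab (wmeet u v) (J \<union> K)
    \<and> (J \<subseteq> GDes v \<and> K \<subseteq> GDes u \<longrightarrow>
         wjoin (parab u J) (parab v K) = parab (wjoin u v) (J \<inter> K))"
proof -
  have "{1..n-1} \<subseteq> {..n}" by auto
  then have J: "J \<subseteq> {..n}" and K: "K \<subseteq> {..n}" using assms(4,5) by blast+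
  show ?thesis
  proof (intro conjI impI)
    show "weak_le (parab u J) (parab v J)" if "weak_le u v"
      using parab_mono[OF assms(2,3) J that] .
    show "weak_le (parab u J) (parab u K)" if "K \<subseteq> J"
      using parab_antimono[OF assms(2) J that] .
    show "wmeet (parab u J) (parab v K) = parab (wmeet u v) (J \<union> K)"
      using wmeet_parab[OF assms(2,3) J K] .
    show "wjoin (parab u J) (parab v K) = parab (wjoin u v) (J \<inter> K)"
      if "J \<subseteq> GDes v \<and> K \<subseteq> GDes u"
      using wjoin_parab[OF assms(2,3)] that by blast
  qed
qed

end
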